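(* Consider the seven lines of a Fano plane, each carrying an orientation, and fix a reference orientation for each line. Let $P$ be the set of lines whose orientation agrees with the reference and $R$ the set of lines whose orientation is reversed, with $N(P)+N(R)=7$. For a line $l_1$, the operation $\mathrm{PL}(l_1)$ reverses the orientation of each of the six lines other than $l_1$ and leaves the orientation of $l_1$ unchanged. After performing $\mathrm{PL}(l_1)$: if $l_1\in P$ then the new count is $N(R)=N(P)-1$ (with $N(P)$ the count before the operation), and if $l_1\in R$ then the new count is $N(R)=N(P)+1$. Consequently, starting from a presentation with $N(R)=0$ (standard Type I box-kite), $N(R)=2$ (standard Type II box-kite), $N(R)=6$ (explosion of a Type I), or $N(R)\in\{4,6\}$ (explosion of a Type II), any subsequent operation $\mathrm{PL}(l_2)$ yields a presentation with $N(R)$ even.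
   Context: Here the Fano plane presentation is that of a box-kite: seven nodes (six L-indices $a,\dots,f$ and the strut constant $S$ in the center) and seven lines (the trips), each oriented by its cyclic positive order of multiplication of the corresponding Cayley–Dickson basis units. The reference orientation is that of a standard Type I box-kite. $\mathrm{PL}(l)$ is the operation of adding a new high power of two $g$ to the four nodes not on the line $l$ (which, by Rule 2 of the Cayley–Dickson sign conventions, reverses exactly the six lines other than $l$). *)

theory Defs
  imports Main
begin

definition fano_lines :: "nat set set" where
  "fano_lines = {{0,1,3},{1,2,4},{2,3,5},{3,4,6},{4,5,0},{5,6,1},{6,0,2}}"

text \<open>An orientation assignment: for each line, True iff its orientation agrees with the
  fixed reference orientation, False iff it is reversed.\<close>
type_synonym orientation = "nat set \<Rightarrow> bool"

definition P_lines :: "orientation \<Rightarrow> nat set set" where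
  "P_lines \<sigma> = {l \<in> fano_lines. \<sigma> l}"

definition R_lines :: "orientation \<Rightarrow> nat set set" where
  "R_lines \<sigma> = {l \<in> fano_lines. \<not> \<sigma> l}"

definition N :: "nat set set \<Rightarrow> nat" where
  "N A = card A"

definition PL :: "nat set \<Rightarrow> orientation \<Rightarrow> orientation" where
  "PL l \<sigma> = (\<lambda>m. if m = l then \<sigma> m else \<not> \<sigma> m)"

end

theory Submission
  imports Defs
begin

(* The lines reversed in PL l \<sigma> are exactly the lines positive in \<sigma>, except that l keeps
   its sign; hence N (R_lines (PL l \<sigma>)) = N (P_lines \<sigma>) \<mp> 1. Since N P + N R = 7 is odd,
   an even N R forces an odd N P, and so an even count after any PL. *)

lemma finite_fano_lines: "finite fano_lines"
  by (simp add: fano_lines_def)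

lemma card_fano_lines: "card fano_lines = 7"
proof -
  \<comment> \<open>The point sums 4, 7, 10, 13, 9, 12, 8 of the lines are distinct.\<close>
  have "inj_on Sum fano_lines"
    by (auto simp: fano_lines_def inj_on_def)
  then have "card fano_lines = card (Sum ` fano_lines)"
    by (simp add: card_image)
  also have "Sum ` fano_lines = {4, 7, 10, 13, 9, 12, 8 :: nat}"
    by (simp add: fano_lines_def)
  finally show ?thesis by simp
qed

lemma finite_P_lines: "finite (P_lines \<sigma>)"
  by (simp add: P_lines_def finite_fano_lines)

lemma N_P_lines_plus_N_R_lines: "N (P_lines \<sigma>) + N (R_lines \<sigma>) = 7"
proof -
  have "P_lines \<sigma> \<union> R_lines \<sigma> = fano_lines" "P_lines \<sigma> \<inter> R_lines \<sigma> = {}"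
    by (auto simp: P_lines_def R_lines_def)
  then show ?thesis
    unfolding N_def
    by (metis card_Un_disjoint card_fano_lines finite_Un finite_fano_lines)
qed

lemma R_lines_PL:
  assumes "l \<in> fano_lines"
  shows "R_lines (PL l \<sigma>) = (if \<sigma> l then P_lines \<sigma> - {l} else insert l (P_lines \<sigma>))"
  using assms by (auto simp: R_lines_def P_lines_def PL_def)

lemma N_R_lines_PL_of_P_lines:
  assumes "l \<in> P_lines \<sigma>"
  shows "N (R_lines (PL l \<sigma>)) = N (P_lines \<sigma>) - 1"
  using assms R_lines_PL[of l \<sigma>] finite_P_lines[of \<sigma>]
  by (simp add: N_def P_lines_def)

lemma N_R_lines_PL_of_R_lines:
  assumes "l \<in> R_lines \<sigma>"
  shows "N (R_lines (PL l \<sigma>)) = N (P_lines \<sigma>) + 1"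
  using assms R_lines_PL[of l \<sigma>] finite_P_lines[of \<sigma>]
  by (simp add: N_def P_lines_def R_lines_def)

lemma even_N_R_lines_PL:
  assumes "l \<in> fano_lines" and "even (N (R_lines \<sigma>))"
  shows "even (N (R_lines (PL l \<sigma>)))"
proof -
  have odd_P: "odd (N (P_lines \<sigma>))"
    using N_P_lines_plus_N_R_lines[of \<sigma>] assms(2) by (metis even_add odd_numeral)
  show ?thesis
  proof (cases "\<sigma> l")
    case True
    then have "l \<in> P_lines \<sigma>" using assms(1) by (simp add: P_lines_def)
    with odd_P show ?thesis by (simp add: N_R_lines_PL_of_P_lines)
  next
    case False
    then have "l \<in> R_lines \<sigma>" using assms(1) by (simp add: R_lines_def)
    with odd_P show ?thesis by (simp add: N_R_lines_PL_of_R_lines)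
  qed
qed

theorem lemma3:
  shows "(\<forall>\<sigma>. N (P_lines \<sigma>) + N (R_lines \<sigma>) = 7)
    \<and> (\<forall>\<sigma> l1. l1 \<in> fano_lines \<longrightarrow>
         (l1 \<in> P_lines \<sigma> \<longrightarrow> N (R_lines (PL l1 \<sigma>)) = N (P_lines \<sigma>) - 1)
       \<and> (l1 \<in> R_lines \<sigma> \<longrightarrow> N (R_lines (PL l1 \<sigma>)) = N (P_lines \<sigma>) + 1))
    \<and> (\<forall>\<sigma> l2. l2 \<in> fano_lines \<longrightarrow> N (R_lines \<sigma>) \<in> {0, 2, 4, 6} \<longrightarrow>
         even (N (R_lines (PL l2 \<sigma>))))"
proof (intro conjI allI impI)
  fix \<sigma> l2
  assume "l2 \<in> fano_lines" and "N (R_lines \<sigma>) \<in> {0, 2, 4, 6}"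
  then show "even (N (R_lines (PL l2 \<sigma>)))"
    by (intro even_N_R_lines_PL) auto
qed (simp_all add: N_P_lines_plus_N_R_lines N_R_lines_PL_of_P_lines N_R_lines_PL_of_R_lines)

end
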